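(* Let $P$ be a probability distribution on $\mathbb R^{d+1}$ with $(\mathbf X,Y)\sim P$. Let $\{b_n^0\}_{n\ge1}\subset\mathbb R$, $\{\mathbf b_n\}_{n\ge1}\subset\mathbb R^d$ and let $\{A_n\}_{n\ge1}$ be Borel subsets of $\mathbb R^{d+1}$ such that $\limsup_n P[A_n]>0$ and $\limsup_n E_P\big[|b_n^0+\mathbf b_n'\mathbf X-Y|^2 I_{A_n}(\mathbf X,Y)\big]<\infty$. Then there exist a subsequence $(n_k)_{k\ge1}$, sequences $\{d_k^0\}\subset\mathbb R$, $\{\mathbf d_k\}\subset\mathbb R^d$ and Borel sets $\{D_k\}$ such that $D_k\subseteq A_{n_k}$, $P[A_{n_k}\setminus D_k]\to0$, $d_k^0\to d^0\in\mathbb R$, $\mathbf d_k\to\mathbf d\in\mathbb R^d$, and for every $k\ge1$, $$(b_{n_k}^0+\mathbf b_{n_k}'\mathbf X-Y)\,I_{D_k}(\mathbf X,Y)=(d_k^0+\mathbf d_k'\mathbf X-Y)\,I_{D_k}(\mathbf X,Y)\quad P\text{-a.s.}$$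
   Context: $E_P$ denotes expectation under $P$ and $I_A$ the indicator function of the set $A$. *)

theory Defs
  imports "HOL-Probability.Probability"
begin

end

theory Submission
  imports Defs
begin

text \<open>Write the affine predictor as an inner product \<open>v \<bullet> Z\<close> with \<open>Z = (1, X)\<close>. If the
  coefficient vectors \<open>v\<^sub>n\<close> are bounded along a subsequence, compactness gives a convergent
  subsequence and the sets \<open>A\<^sub>n\<close> themselves can serve as \<open>D\<close>. Otherwise pass to a subsequence with
  \<open>|v\<^sub>n| \<ge> 2\<^sup>n\<close> and \<open>v\<^sub>n / |v\<^sub>n| \<rightarrow> u\<close>. Dividing the bounded squared error by
  \<open>|v\<^sub>n|\<^sup>2\<close> gives functions with summable integrals, hence tending to 0 almost surely; since
  they stay close to \<open>(u \<bullet> Z)\<^sup>2\<close> on \<open>A\<^sub>n\<close>, the part of \<open>A\<^sub>n\<close> where \<open>u \<bullet> Z \<noteq> 0\<close> has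
  vanishing probability. On the remaining part, \<open>v\<^sub>n \<bullet> Z\<close> does not change when \<open>v\<^sub>n\<close> is
  projected onto \<open>u\<^sup>\<perp>\<close>, so the argument recurses in a subspace of smaller dimension.\<close>

lemma filterlim_at_top_imp_subseq_ge_power2:
  fixes f :: "nat \<Rightarrow> real"
  assumes "filterlim f at_top sequentially"
  shows "\<exists>r. strict_mono r \<and> (\<forall>k. 2^k \<le> f (r k))"
proof -
  have "\<forall>k. \<exists>N. \<forall>n\<ge>N. 2^k \<le> f n"
    using assms by (simp add: filterlim_at_top eventually_sequentially)
  then obtain N where N: "\<And>k n. N k \<le> n \<Longrightarrow> 2^k \<le> f n" by metis
  define r where "r k = k + (\<Sum>i\<le>k. N i)" for k
  have "strict_mono r" unfolding strict_mono_Suc_iff r_def by simp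
  moreover have "N k \<le> r k" for k
    unfolding r_def using member_le_sum[of k "{..k}" N] by simp
  ultimately show ?thesis using N by blast
qed

lemma AE_tendsto_0_if_summable_nn_integral:
  fixes f :: "nat \<Rightarrow> 'a \<Rightarrow> real"
  assumes [measurable]: "\<And>n. f n \<in> borel_measurable M" and f_nonneg: "\<And>n x. 0 \<le> f n x"
    and "summable c" and "\<And>n. 0 \<le> c n" and bound: "\<And>n. (\<integral>\<^sup>+x. f n x \<partial>M) \<le> ennreal (c n)"
  shows "AE x in M. (\<lambda>n. f n x) \<longlonglongrightarrow> 0"
proof -
  have "(\<integral>\<^sup>+x. (\<Sum>n. ennreal (f n x)) \<partial>M) = (\<Sum>n. \<integral>\<^sup>+x. f n x \<partial>M)"
    by (intro nn_integral_suminf) measurable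
  also have "\<dots> \<le> (\<Sum>n. ennreal (c n))"
    by (intro suminf_le bound summableI)
  also have "\<dots> = ennreal (\<Sum>n. c n)"
    using assms by (intro suminf_ennreal2) auto
  also have "\<dots> < \<infinity>" by simp
  finally have "(\<integral>\<^sup>+x. (\<Sum>n. ennreal (f n x)) \<partial>M) \<noteq> \<infinity>" by simp
  then have "AE x in M. (\<Sum>n. ennreal (f n x)) \<noteq> \<infinity>"
    by (intro nn_integral_PInf_AE) measurable
  then show ?thesis
  proof eventually_elim
    case (elim x)
    then have "summable (\<lambda>n. f n x)"
      using f_nonneg by (intro summable_suminf_not_top) auto
    then show ?case by (rule summable_LIMSEQ_zero)
  qed
qed

lemma (in finite_measure) measure_tendsto_0_if_AE_indicator_tendsto_0:
  assumes "\<And>n. B n \<in> sets M" and "AE x in M. (\<lambda>n. indicator (B n) x :: real) \<longlonglongrightarrow> 0"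
  shows "(\<lambda>n. measure M (B n)) \<longlonglongrightarrow> 0"
proof -
  have "(\<lambda>n. integral\<^sup>L M (indicator (B n) :: _ \<Rightarrow> real)) \<longlonglongrightarrow> integral\<^sup>L M (\<lambda>x. 0::real)"
    by (rule integral_dominated_convergence[where w="\<lambda>x. 1"]) (use assms in auto)
  moreover have "B n \<inter> space M = B n" for n
    using sets.sets_into_space[OF assms(1)] by blast
  ultimately show ?thesis by simp
qed

lemma AE_divide_square_tendsto_0:
  fixes h :: "nat \<Rightarrow> 'a \<Rightarrow> real" and R :: "nat \<Rightarrow> real"
  assumes [measurable]: "\<And>n. h n \<in> borel_measurable M" and h_nonneg: "\<And>n x. 0 \<le> h n x"
    and bound: "\<And>n. (\<integral>\<^sup>+x. h n x \<partial>M) \<le> ennreal K" and "0 \<le> K" and R: "\<And>n. 2^n \<le> R n"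
  shows "AE x in M. (\<lambda>n. h n x / (R n)\<^sup>2) \<longlonglongrightarrow> 0"
proof (rule AE_tendsto_0_if_summable_nn_integral[where c="\<lambda>n. K * (1/4)^n"])
  fix n
  have "(4::real)^n = (2^n)\<^sup>2"
    by (metis power_mult_distrib power2_eq_square numeral_Bit0_eq_double)
  also have "\<dots> \<le> (R n)\<^sup>2"
    using R[of n] by (intro power_mono) auto
  finally have R_square: "4^n \<le> (R n)\<^sup>2" .
  have "(\<integral>\<^sup>+x. h n x / (R n)\<^sup>2 \<partial>M) = ennreal (1 / (R n)\<^sup>2) * (\<integral>\<^sup>+x. h n x \<partial>M)"
    by (subst nn_integral_cmult[symmetric], measurable)
      (intro nn_integral_cong, simp add: ennreal_mult[symmetric] h_nonneg)
  also have "\<dots> \<le> ennreal (1 / (R n)\<^sup>2) * ennreal K"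
    using bound by (rule mult_left_mono) simp
  also have "\<dots> = ennreal (K / (R n)\<^sup>2)"
    using \<open>0 \<le> K\<close> by (simp add: ennreal_mult[symmetric])
  also have "\<dots> \<le> ennreal (K * (1/4)^n)"
  proof (rule ennreal_leI)
    have "K / (R n)\<^sup>2 \<le> K / 4^n"
      using \<open>0 \<le> K\<close> R_square less_le_trans[OF _ R_square, of 0] by (intro divide_left_mono) auto
    then show "K / (R n)\<^sup>2 \<le> K * (1/4)^n"
      by (simp add: power_one_over)
  qed
  finally show "(\<integral>\<^sup>+x. h n x / (R n)\<^sup>2 \<partial>M) \<le> ennreal (K * (1/4)^n)" .
qed (use \<open>0 \<le> K\<close> h_nonneg in \<open>auto intro!: summable_mult summable_geometric\<close>)

lemma (in prob_space) measure_nonorthogonal_part_tendsto_0: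
  fixes Z :: "'a \<Rightarrow> 'c::euclidean_space" and Y :: "'a \<Rightarrow> real"
  assumes [measurable]: "Z \<in> borel_measurable M" "Y \<in> borel_measurable M" "\<And>n. A n \<in> sets M"
    and u: "uu \<longlonglongrightarrow> u" and R: "\<And>n. 2^n \<le> R n" and "0 \<le> K"
    and bound: "\<And>n. (\<integral>\<^sup>+x. ennreal ((R n *\<^sub>R uu n \<bullet> Z x - Y x)\<^sup>2 * indicator (A n) x) \<partial>M) \<le> ennreal K"
  shows "(\<lambda>n. measure M (A n \<inter> {x\<in>space M. u \<bullet> Z x \<noteq> 0})) \<longlonglongrightarrow> 0"
proof -
  define g where "g n x = (uu n \<bullet> Z x - Y x / R n)\<^sup>2 * indicator (A n) x" for n x
  have "g n x = (R n *\<^sub>R uu n \<bullet> Z x - Y x)\<^sup>2 * indicator (A n) x / (R n)\<^sup>2" for n x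
  proof -
    have "R n \<noteq> 0"
      using less_le_trans[OF zero_less_power R[of n]] by simp
    then show ?thesis
      by (simp add: g_def field_simps power2_eq_square)
  qed
  moreover have "AE x in M.
      (\<lambda>n. (R n *\<^sub>R uu n \<bullet> Z x - Y x)\<^sup>2 * indicator (A n) x / (R n)\<^sup>2) \<longlonglongrightarrow> 0"
    using bound \<open>0 \<le> K\<close> R by (intro AE_divide_square_tendsto_0) auto
  ultimately have g_0: "AE x in M. (\<lambda>n. g n x) \<longlonglongrightarrow> 0"
    by simp
  have "filterlim R at_top sequentially"
  proof (rule filterlim_at_top_mono[OF filterlim_real_sequentially always_eventually], rule allI)
    fix n :: nat
    have "real n \<le> 2^n"
      using less_exp[of n] by (metis less_imp_le of_nat_le_iff of_nat_numeral of_nat_power)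
    then show "real n \<le> R n" using R[of n] by linarith
  qed
  then have Y_R: "(\<lambda>n. Y x / R n) \<longlonglongrightarrow> 0" for x
    by (intro tendsto_divide_0[OF tendsto_const] filterlim_at_top_imp_at_infinity)
  have "AE x in M. (\<lambda>n. indicator (A n \<inter> {x\<in>space M. u \<bullet> Z x \<noteq> 0}) x :: real) \<longlonglongrightarrow> 0"
    using g_0
  proof eventually_elim
    case (elim x)
    show ?case
    proof (cases "u \<bullet> Z x = 0")
      case False
      then have pos: "0 < (u \<bullet> Z x)\<^sup>2" by simp
      have "(\<lambda>n. (uu n \<bullet> Z x - Y x / R n)\<^sup>2) \<longlonglongrightarrow> (u \<bullet> Z x - 0)\<^sup>2"
        by (intro tendsto_intros u Y_R)
      then have "eventually (\<lambda>n. (u \<bullet> Z x)\<^sup>2 / 2 < (uu n \<bullet> Z x - Y x / R n)\<^sup>2) sequentially"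
        using pos by (intro order_tendstoD) auto
      moreover have "eventually (\<lambda>n. g n x < (u \<bullet> Z x)\<^sup>2 / 2) sequentially"
        using elim pos by (intro order_tendstoD) auto
      ultimately have "eventually (\<lambda>n. x \<notin> A n) sequentially"
        by eventually_elim (auto simp: g_def)
      then show ?thesis
        by (intro tendsto_eventually) (auto elim: eventually_mono)
    qed simp
  qed
  then show ?thesis
    by (intro measure_tendsto_0_if_AE_indicator_tendsto_0) measurable
qed

definition convergent_on_large_parts ::
    "'b measure \<Rightarrow> ('b \<Rightarrow> 'a::real_inner) \<Rightarrow> (nat \<Rightarrow> 'b set) \<Rightarrow> (nat \<Rightarrow> 'a) \<Rightarrow> bool" where
  "convergent_on_large_parts M Z A v \<longleftrightarrow>
    (\<exists>r w D. strict_mono r \<and> convergent w \<and> (\<forall>k. D k \<in> sets M \<and> D k \<subseteq> A (r k)) \<and>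
      (\<lambda>k. measure M (A (r k) - D k)) \<longlonglongrightarrow> 0 \<and>
      (\<forall>k. AE x in M. x \<in> D k \<longrightarrow> v (r k) \<bullet> Z x = w k \<bullet> Z x))"

lemma convergent_on_large_partsI:
  fixes r :: "nat \<Rightarrow> nat" and w :: "nat \<Rightarrow> 'a::real_inner" and D :: "nat \<Rightarrow> 'b set"
  assumes "strict_mono r" and "convergent w" and "\<And>k. D k \<in> sets M" and "\<And>k. D k \<subseteq> A (r k)"
    and "(\<lambda>k. measure M (A (r k) - D k)) \<longlonglongrightarrow> 0"
    and "\<And>k. AE x in M. x \<in> D k \<longrightarrow> v (r k) \<bullet> Z x = w k \<bullet> Z x"
  shows "convergent_on_large_parts M Z A v"
  unfolding convergent_on_large_parts_def using assms by blast

lemma convergent_on_large_partsE: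
  assumes "convergent_on_large_parts M Z A v"
  obtains r :: "nat \<Rightarrow> nat" and w D where "strict_mono r" and "convergent w" and "\<And>k. D k \<in> sets M"
    and "\<And>k. D k \<subseteq> A (r k)" and "(\<lambda>k. measure M (A (r k) - D k)) \<longlonglongrightarrow> 0"
    and "\<And>k. AE x in M. x \<in> D k \<longrightarrow> v (r k) \<bullet> Z x = w k \<bullet> Z x"
  using assms unfolding convergent_on_large_parts_def by blast

lemma convergent_on_large_parts_subseq:
  assumes "strict_mono \<rho>" and "convergent_on_large_parts M Z (A \<circ> \<rho>) (v \<circ> \<rho>)"
  shows "convergent_on_large_parts M Z A v"
proof -
  obtain r :: "nat \<Rightarrow> nat" and w D where "strict_mono r" "convergent w" "\<And>k. D k \<in> sets M"
    "\<And>k. D k \<subseteq> (A \<circ> \<rho>) (r k)"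
    "(\<lambda>k. measure M ((A \<circ> \<rho>) (r k) - D k)) \<longlonglongrightarrow> 0"
    "\<And>k. AE x in M. x \<in> D k \<longrightarrow> (v \<circ> \<rho>) (r k) \<bullet> Z x = w k \<bullet> Z x"
    using assms(2) by (rule convergent_on_large_partsE) (rule that)
  with assms(1) show ?thesis
    by (intro convergent_on_large_partsI[of "\<rho> \<circ> r"]) (simp_all add: strict_mono_o)
qed

lemma convergent_on_large_parts_if_convergent:
  assumes "convergent v" and "\<And>n. A n \<in> sets M"
  shows "convergent_on_large_parts M Z A v"
  using assms by (intro convergent_on_large_partsI[of id v A]) (simp_all add: strict_mono_id)

lemma (in finite_measure) convergent_on_large_parts_if_agrees_on_subsets:
  assumes "convergent_on_large_parts M Z A' v'"
    and "\<And>n. A n \<in> sets M" and "\<And>n. A' n \<in> sets M" and "\<And>n. A' n \<subseteq> A n"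
    and "(\<lambda>n. measure M (A n - A' n)) \<longlonglongrightarrow> 0"
    and "\<And>n x. x \<in> A' n \<Longrightarrow> v' n \<bullet> Z x = v n \<bullet> Z x"
  shows "convergent_on_large_parts M Z A v"
proof -
  obtain r :: "nat \<Rightarrow> nat" and w D where r: "strict_mono r" and "convergent w"
    and D: "\<And>k. D k \<in> sets M" "\<And>k. D k \<subseteq> A' (r k)"
    and D_large: "(\<lambda>k. measure M (A' (r k) - D k)) \<longlonglongrightarrow> 0"
    and agree: "\<And>k. AE x in M. x \<in> D k \<longrightarrow> v' (r k) \<bullet> Z x = w k \<bullet> Z x"
    using assms(1) by (rule convergent_on_large_partsE) (rule that)
  have small_parts: "A (r k) - A' (r k) \<in> sets M" "A' (r k) - D k \<in> sets M" for k
    using assms(2,3) D(1) by (auto intro: sets.Diff)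
  have bound: "measure M (A (r k) - D k) \<le> measure M (A (r k) - A' (r k)) + measure M (A' (r k) - D k)" for k
  proof -
    have "A (r k) - D k \<subseteq> (A (r k) - A' (r k)) \<union> (A' (r k) - D k)" by blast
    then have "measure M (A (r k) - D k) \<le> measure M ((A (r k) - A' (r k)) \<union> (A' (r k) - D k))"
      using small_parts by (intro finite_measure_mono sets.Un)
    also have "\<dots> \<le> measure M (A (r k) - A' (r k)) + measure M (A' (r k) - D k)"
      using small_parts by (rule measure_Un_le)
    finally show ?thesis .
  qed
  have "(\<lambda>k. measure M (A (r k) - A' (r k)) + measure M (A' (r k) - D k)) \<longlonglongrightarrow> 0 + 0"
    using LIMSEQ_subseq_LIMSEQ[OF assms(5) r] D_large unfolding comp_def by (rule tendsto_add)
  then have "(\<lambda>k. measure M (A (r k) - A' (r k)) + measure M (A' (r k) - D k)) \<longlonglongrightarrow> 0"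
    by simp
  then have "(\<lambda>k. measure M (A (r k) - D k)) \<longlonglongrightarrow> 0"
    by (rule tendsto_sandwich[OF _ _ tendsto_const, rotated 2]) (simp_all add: bound)
  moreover have "AE x in M. x \<in> D k \<longrightarrow> v (r k) \<bullet> Z x = w k \<bullet> Z x" for k
    using agree[of k] by eventually_elim (use D(2)[of k] assms(6)[of _ "r k"] in auto)
  moreover have "D k \<subseteq> A (r k)" for k
    using D assms(4) by blast
  ultimately show ?thesis
    using r \<open>convergent w\<close> D by (intro convergent_on_large_partsI)
qed

lemma convergent_on_large_parts_if_infinite_bounded:
  fixes v :: "nat \<Rightarrow> 'a::euclidean_space"
  assumes "infinite {n. norm (v n) \<le> B}" and "\<And>n. A n \<in> sets M"
  shows "convergent_on_large_parts M Z A v"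
proof -
  obtain r1 :: "nat \<Rightarrow> nat" where r1: "strict_mono r1" "\<And>n. r1 n \<in> {n. norm (v n) \<le> B}"
    using infinite_enumerate[OF assms(1)] by blast
  then have "\<forall>n. (v \<circ> r1) n \<in> cball 0 B" by simp
  then obtain l r2 where "l \<in> cball 0 B" and r2: "strict_mono r2" and "(v \<circ> r1 \<circ> r2) \<longlonglongrightarrow> l"
    by (rule seq_compactE[OF compact_imp_seq_compact[OF compact_cball]])
  then have "convergent (v \<circ> (r1 \<circ> r2))"
    unfolding convergent_def o_assoc by blast
  then have "convergent_on_large_parts M Z (A \<circ> (r1 \<circ> r2)) (v \<circ> (r1 \<circ> r2))"
    by (rule convergent_on_large_parts_if_convergent) (simp add: assms(2))
  with strict_mono_o[OF r1(1) r2] show ?thesis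
    by (rule convergent_on_large_parts_subseq)
qed

lemma (in prob_space) nonorthogonal_part_negligible_if_unbounded:
  fixes Z :: "'a \<Rightarrow> 'c::euclidean_space" and Y :: "'a \<Rightarrow> real"
  assumes [measurable]: "Z \<in> borel_measurable M" "Y \<in> borel_measurable M" "\<And>n. A n \<in> events"
    and "0 \<le> K" and S: "subspace S" "\<And>n. v n \<in> S"
    and bound: "\<And>n. (\<integral>\<^sup>+x. ennreal ((v n \<bullet> Z x - Y x)\<^sup>2 * indicator (A n) x) \<partial>M) \<le> ennreal K"
    and unbounded: "filterlim (\<lambda>n. norm (v n)) at_top sequentially"
  obtains \<rho> u where "strict_mono \<rho>" and "u \<in> S" and "norm u = 1"
    and "(\<lambda>n. measure M (A (\<rho> n) \<inter> {x\<in>space M. u \<bullet> Z x \<noteq> 0})) \<longlonglongrightarrow> 0"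
proof -
  obtain r1 :: "nat \<Rightarrow> nat" where r1: "strict_mono r1" "\<And>k. 2^k \<le> norm (v (r1 k))"
    using filterlim_at_top_imp_subseq_ge_power2[OF unbounded] by blast
  have v_nonzero: "v (r1 k) \<noteq> 0" for k
    using less_le_trans[OF zero_less_power r1(2)[of k]] by simp
  define uu where "uu k = v (r1 k) /\<^sub>R norm (v (r1 k))" for k
  have "uu k \<in> sphere 0 1 \<inter> S" for k
    using v_nonzero[of k] S unfolding uu_def by (auto intro: subspace_scale)
  moreover have "compact (sphere 0 1 \<inter> S)"
    using S(1) by (intro compact_Int_closed compact_sphere closed_subspace)
  ultimately obtain u r2 where u: "u \<in> sphere 0 1 \<inter> S" and r2: "strict_mono r2"
    and u_lim: "(uu \<circ> r2) \<longlonglongrightarrow> u"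
    using seq_compactE[OF compact_imp_seq_compact] by blast
  have "(\<lambda>n. measure M (A (r1 (r2 n)) \<inter> {x\<in>space M. u \<bullet> Z x \<noteq> 0})) \<longlonglongrightarrow> 0"
  proof (rule measure_nonorthogonal_part_tendsto_0[OF _ _ _ u_lim _ \<open>0 \<le> K\<close>])
    show "2^k \<le> norm (v (r1 (r2 k)))" for k
    proof -
      have "(2::real)^k \<le> 2^(r2 k)"
        using seq_suble[OF r2, of k] by (rule power_increasing) simp
      also have "\<dots> \<le> norm (v (r1 (r2 k)))"
        using r1(2) by simp
      finally show ?thesis .
    qed
    show "(\<integral>\<^sup>+x. ennreal ((norm (v (r1 (r2 k))) *\<^sub>R (uu \<circ> r2) k \<bullet> Z x - Y x)\<^sup>2
        * indicator (A (r1 (r2 k))) x) \<partial>M) \<le> ennreal K" for k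
      using bound v_nonzero unfolding uu_def by simp
  qed measurable
  moreover have "strict_mono (r1 \<circ> r2)"
    using r1(1) r2 by (rule strict_mono_o)
  ultimately show ?thesis
    using u by (intro that[of "r1 \<circ> r2" u]) simp_all
qed

lemma (in prob_space) convergent_on_large_parts_if_bounded_sq_error:
  fixes Z :: "'a \<Rightarrow> 'c::euclidean_space" and Y :: "'a \<Rightarrow> real"
  assumes [measurable]: "Z \<in> borel_measurable M" "Y \<in> borel_measurable M" and "0 \<le> K"
  shows "subspace S \<Longrightarrow> (\<And>n. v n \<in> S) \<Longrightarrow> (\<And>n. A n \<in> events) \<Longrightarrow>
    (\<And>n. (\<integral>\<^sup>+x. ennreal ((v n \<bullet> Z x - Y x)\<^sup>2 * indicator (A n) x) \<partial>M) \<le> ennreal K) \<Longrightarrow>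
    convergent_on_large_parts M Z A v"
proof (induction "dim S" arbitrary: S v A rule: less_induct)
  case less
  note A_events[measurable] = less.prems(3)
  show ?case
  proof (cases "\<exists>B. infinite {n. norm (v n) \<le> B}")
    case True
    then show ?thesis
      using convergent_on_large_parts_if_infinite_bounded A_events by blast
  next
    case False
    have unbounded: "filterlim (\<lambda>n. norm (v n)) at_top sequentially"
      unfolding filterlim_at_top_dense
    proof
      fix B :: real
      have "finite {n. norm (v n) \<le> B}" using False by blast
      then show "eventually (\<lambda>n. B < norm (v n)) sequentially"
        unfolding cofinite_eq_sequentially[symmetric] eventually_cofinite by (simp add: not_less)
    qed
    obtain \<rho> u where \<rho>: "strict_mono \<rho>" and u: "u \<in> S" "norm u = 1"
      and negligible: "(\<lambda>n. measure M (A (\<rho> n) \<inter> {x\<in>space M. u \<bullet> Z x \<noteq> 0})) \<longlonglongrightarrow> 0"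
      by (rule nonorthogonal_part_negligible_if_unbounded[OF assms(1,2) A_events \<open>0 \<le> K\<close>
            less.prems(1,2,4) unbounded]) (rule that)
    define S' where "S' = S \<inter> {x. u \<bullet> x = 0}"
    define v' where "v' n = v (\<rho> n) - (u \<bullet> v (\<rho> n)) *\<^sub>R u" for n
    define A' where "A' n = A (\<rho> n) \<inter> {x\<in>space M. u \<bullet> Z x = 0}" for n
    have A'_events[measurable]: "A' n \<in> events" for n
      unfolding A'_def by measurable
    have v'_agrees: "v' n \<bullet> Z x = v (\<rho> n) \<bullet> Z x" if "x \<in> A' n" for n x
      using that unfolding v'_def A'_def by (simp add: inner_diff_left)
    have "u \<bullet> u = 1" using u by (simp add: dot_square_norm)
    then have "u \<notin> S'" unfolding S'_def by simp
    then have "S' \<subset> S" using u unfolding S'_def by blast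
    have "subspace S'"
      unfolding S'_def using less.prems(1) by (intro subspace_inter subspace_hyperplane)
    have "dim S' < dim S"
      using dim_psubset[of S' S] \<open>S' \<subset> S\<close> \<open>subspace S'\<close> less.prems(1) by (metis span_eq_iff)
    have v'_in: "v' n \<in> S'" for n
      using less.prems(1,2) u \<open>u \<bullet> u = 1\<close> unfolding S'_def v'_def
      by (auto intro!: subspace_diff subspace_scale simp: inner_diff_right)
    have v'_bound: "(\<integral>\<^sup>+x. ennreal ((v' n \<bullet> Z x - Y x)\<^sup>2 * indicator (A' n) x) \<partial>M) \<le> ennreal K" for n
    proof -
      have "(\<integral>\<^sup>+x. ennreal ((v' n \<bullet> Z x - Y x)\<^sup>2 * indicator (A' n) x) \<partial>M)
          \<le> (\<integral>\<^sup>+x. ennreal ((v (\<rho> n) \<bullet> Z x - Y x)\<^sup>2 * indicator (A (\<rho> n)) x) \<partial>M)"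
        using v'_agrees unfolding A'_def by (intro nn_integral_mono) (auto simp: indicator_def)
      then show ?thesis by (rule order_trans[OF _ less.prems(4)])
    qed
    have "convergent_on_large_parts M Z A' v'"
      by (rule less.hyps[OF \<open>dim S' < dim S\<close> \<open>subspace S'\<close> v'_in A'_events v'_bound])
    then have "convergent_on_large_parts M Z (A \<circ> \<rho>) (v \<circ> \<rho>)"
    proof (rule convergent_on_large_parts_if_agrees_on_subsets)
      have "A (\<rho> n) - A' n = A (\<rho> n) \<inter> {x\<in>space M. u \<bullet> Z x \<noteq> 0}" for n
        using sets.sets_into_space[OF A_events] unfolding A'_def by blast
      with negligible show "(\<lambda>n. measure M ((A \<circ> \<rho>) n - A' n)) \<longlonglongrightarrow> 0" by simp
    qed (auto simp: A'_def v'_agrees)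
    with \<rho> show ?thesis by (rule convergent_on_large_parts_subseq)
  qed
qed

lemma (in prob_space) convergent_on_large_parts_if_limsup_sq_error:
  fixes Z :: "'a \<Rightarrow> 'c::euclidean_space" and Y :: "'a \<Rightarrow> real"
  assumes Z: "Z \<in> borel_measurable M" and Y: "Y \<in> borel_measurable M" and A: "\<And>n. A n \<in> events"
    and limsup: "limsup (\<lambda>n. \<integral>\<^sup>+x. ennreal ((v n \<bullet> Z x - Y x)\<^sup>2 * indicator (A n) x) \<partial>M) < \<infinity>"
  shows "convergent_on_large_parts M Z A v"
proof -
  define F where "F n = (\<integral>\<^sup>+x. ennreal ((v n \<bullet> Z x - Y x)\<^sup>2 * indicator (A n) x) \<partial>M)" for n
  have "limsup F < top"
    using limsup unfolding F_def by simp
  then obtain a where "0 \<le> a" "limsup F = ennreal a"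
    unfolding less_top_ennreal by blast
  then have "limsup F < ennreal (a + 1)" by simp
  then have "eventually (\<lambda>n. F n < ennreal (a + 1)) sequentially"
    by (rule Limsup_lessD)
  then obtain N where N: "\<And>n. N \<le> n \<Longrightarrow> F n < ennreal (a + 1)"
    unfolding eventually_sequentially by blast
  have "convergent_on_large_parts M Z (A \<circ> (\<lambda>n. n + N)) (v \<circ> (\<lambda>n. n + N))"
  proof (rule convergent_on_large_parts_if_bounded_sq_error[OF Z Y _ subspace_UNIV])
    show "0 \<le> a + 1" using \<open>0 \<le> a\<close> by simp
    show "(\<integral>\<^sup>+x. ennreal (((v \<circ> (\<lambda>n. n + N)) n \<bullet> Z x - Y x)\<^sup>2 * indicator ((A \<circ> (\<lambda>n. n + N)) n) x) \<partial>M)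
        \<le> ennreal (a + 1)" for n
      using N[of "n + N"] unfolding F_def by simp
  qed (simp_all add: A)
  moreover have "strict_mono (\<lambda>n. n + N)"
    by (simp add: strict_mono_def)
  ultimately show ?thesis
    by (rule convergent_on_large_parts_subseq[rotated])
qed

theorem lemma1:
  fixes P :: "((real ^ 'd) \<times> real) measure"
    and b0 :: "nat \<Rightarrow> real" and b :: "nat \<Rightarrow> real ^ 'd"
    and A :: "nat \<Rightarrow> ((real ^ 'd) \<times> real) set"
  assumes "prob_space P"
    and "sets P = sets borel"
    and "\<And>n. A n \<in> sets borel"
    and "limsup (\<lambda>n. emeasure P (A n)) > 0"
    and "limsup (\<lambda>n. \<integral>\<^sup>+ z. ennreal ((b0 n + b n \<bullet> fst z - snd z)\<^sup>2 * indicator (A n) z) \<partial>P) < \<infinity>"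
  shows "\<exists>nk :: nat \<Rightarrow> nat. strict_mono nk \<and>
    (\<exists>(d0 :: nat \<Rightarrow> real) (dv :: nat \<Rightarrow> real ^ 'd) (D :: nat \<Rightarrow> ((real ^ 'd) \<times> real) set)
       (c0 :: real) (c :: real ^ 'd).
       (\<forall>k. D k \<in> sets borel \<and> D k \<subseteq> A (nk k)) \<and>
       (\<lambda>k. measure P (A (nk k) - D k)) \<longlonglongrightarrow> 0 \<and>
       d0 \<longlonglongrightarrow> c0 \<and> dv \<longlonglongrightarrow> c \<and>
       (\<forall>k. AE z in P. (b0 (nk k) + b (nk k) \<bullet> fst z - snd z) * indicator (D k) z =
                        (d0 k + dv k \<bullet> fst z - snd z) * indicator (D k) z))"
proof -
  interpret prob_space P by fact
  define Z where "Z z = (1::real, fst z)" for z :: "(real ^ 'd) \<times> real"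
  have affine: "(c0, c) \<bullet> Z z = c0 + c \<bullet> fst z" for c0 c z
    unfolding Z_def by simp
  have "Z \<in> borel_measurable P" "snd \<in> borel_measurable P"
    unfolding measurable_cong_sets[OF assms(2) refl] Z_def
    by (intro borel_measurable_continuous_onI continuous_intros)+
  then have "convergent_on_large_parts P Z A (\<lambda>n. (b0 n, b n))"
    using assms(2,3,5) by (intro convergent_on_large_parts_if_limsup_sq_error) (simp_all add: affine)
  then obtain r :: "nat \<Rightarrow> nat" and w D where "strict_mono r" "convergent w" "\<And>k. D k \<in> sets P"
    "\<And>k. D k \<subseteq> A (r k)" "(\<lambda>k. measure P (A (r k) - D k)) \<longlonglongrightarrow> 0"
    and agree: "\<And>k. AE z in P. z \<in> D k \<longrightarrow> (b0 (r k), b (r k)) \<bullet> Z z = w k \<bullet> Z z"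
    by (rule convergent_on_large_partsE) (rule that)
  moreover have "AE z in P. (b0 (r k) + b (r k) \<bullet> fst z - snd z) * indicator (D k) z =
      (fst (w k) + snd (w k) \<bullet> fst z - snd z) * indicator (D k) z" for k
    using agree[of k] by eventually_elim (simp add: affine[symmetric] indicator_def)
  moreover have "w \<longlonglongrightarrow> lim w"
    using \<open>convergent w\<close> by (simp add: convergent_LIMSEQ_iff)
  ultimately show ?thesis
    using assms(2)
    by (intro exI[of _ r] exI[of _ "\<lambda>k. fst (w k)"] exI[of _ "\<lambda>k. snd (w k)"] exI[of _ D]
        exI[of _ "fst (lim w)"] exI[of _ "snd (lim w)"] conjI allI tendsto_fst tendsto_snd) simp_all
qed

end
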